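(* For a path connected space $X$ with basepoint $x_0$, the following are equivalent: (1) $\pi_1^{\tau}(X,x_0)$ is discrete; (2) $\pi_1^{qtop}(X,x_0)$ is discrete; (3) every null-homotopic loop $\alpha\in\Omega(X,x_0)$ has an open neighborhood in $\Omega(X,x_0)$ containing only null-homotopic loops.
   Context: $\Omega(X,x_0)$ is the space of loops at $x_0$ with the compact-open topology; $\pi_1^{qtop}(X,x_0)$ is $\pi_1(X,x_0)$ with the quotient topology via $\alpha\mapsto[\alpha]$. $F_M(S)$ is the free (Markov) topological group on a space $S$. For a group with topology $G$, $\tau(G)$ is $G$ with the quotient topology with respect to the multiplication epimorphism $m_G:F_M(G)\to G$ (generator $g\mapsto g$). $\pi_1^{\tau}=\tau\circ\pi_1^{qtop}$. *)

theory Defs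
  imports "HOL-Analysis.Analysis"
begin

definition quotient_top :: "'a topology \<Rightarrow> ('a \<Rightarrow> 'b) \<Rightarrow> 'b set \<Rightarrow> 'b topology" where
  "quotient_top T f Y = topology (\<lambda>U. U \<subseteq> Y \<and> openin T {x \<in> topspace T. f x \<in> U})"

definition is_discrete :: "'a topology \<Rightarrow> bool" where
  "is_discrete T \<longleftrightarrow> T = discrete_topology (topspace T)"

text \<open>Loops are parametrised on [0,1]; to have a genuine function space we normalise
  them to be extensional (value undefined) outside [0,1].\<close>
definition loops :: "'a topology \<Rightarrow> 'a \<Rightarrow> (real \<Rightarrow> 'a) set" where
  "loops X x0 = {g. pathin X g \<and> g 0 = x0 \<and> g 1 = x0 \<and> g \<in> extensional {0..1}}"

definition loop_space :: "'a topology \<Rightarrow> 'a \<Rightarrow> (real \<Rightarrow> 'a) topology" where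
  "loop_space X x0 = topology_generated_by
     {{g \<in> loops X x0. g ` K \<subseteq> U} | K U. compact K \<and> K \<subseteq> {0..1} \<and> openin X U}"

definition const_loop :: "'a \<Rightarrow> real \<Rightarrow> 'a" where
  "const_loop x0 = restrict (\<lambda>t. x0) {0..1}"

definition homotopic_rel_ends :: "'a topology \<Rightarrow> 'a \<Rightarrow> (real \<Rightarrow> 'a) \<Rightarrow> (real \<Rightarrow> 'a) \<Rightarrow> bool" where
  "homotopic_rel_ends X x0 p q =
     homotopic_with (\<lambda>r. r 0 = x0 \<and> r 1 = x0) (top_of_set {0..1}) X p q"

definition loop_class :: "'a topology \<Rightarrow> 'a \<Rightarrow> (real \<Rightarrow> 'a) \<Rightarrow> (real \<Rightarrow> 'a) set" where
  "loop_class X x0 p = {q \<in> loops X x0. homotopic_rel_ends X x0 p q}"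

definition loop_join :: "(real \<Rightarrow> 'a) \<Rightarrow> (real \<Rightarrow> 'a) \<Rightarrow> real \<Rightarrow> 'a" where
  "loop_join p q = restrict (\<lambda>t. if t \<le> 1/2 then p (2*t) else q (2*t - 1)) {0..1}"

definition loop_rev :: "(real \<Rightarrow> 'a) \<Rightarrow> real \<Rightarrow> 'a" where
  "loop_rev p = restrict (\<lambda>t. p (1 - t)) {0..1}"

definition pi1_carrier :: "'a topology \<Rightarrow> 'a \<Rightarrow> (real \<Rightarrow> 'a) set set" where
  "pi1_carrier X x0 = loop_class X x0 ` loops X x0"

definition pi1_qtop :: "'a topology \<Rightarrow> 'a \<Rightarrow> (real \<Rightarrow> 'a) set topology" where
  "pi1_qtop X x0 = quotient_top (loop_space X x0) (loop_class X x0) (pi1_carrier X x0)"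

definition pi1_mult :: "'a topology \<Rightarrow> 'a \<Rightarrow> (real \<Rightarrow> 'a) set \<Rightarrow> (real \<Rightarrow> 'a) set \<Rightarrow> (real \<Rightarrow> 'a) set" where
  "pi1_mult X x0 A B = loop_class X x0 (loop_join (SOME p. p \<in> A) (SOME q. q \<in> B))"

definition pi1_inv :: "'a topology \<Rightarrow> 'a \<Rightarrow> (real \<Rightarrow> 'a) set \<Rightarrow> (real \<Rightarrow> 'a) set" where
  "pi1_inv X x0 A = loop_class X x0 (loop_rev (SOME p. p \<in> A))"

definition pi1_one :: "'a topology \<Rightarrow> 'a \<Rightarrow> (real \<Rightarrow> 'a) set" where
  "pi1_one X x0 = loop_class X x0 (const_loop x0)"

text \<open>A letter (x, True) stands for x, (x, False) for x^{-1}.\<close>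
fun reduced :: "('g \<times> bool) list \<Rightarrow> bool" where
  "reduced [] = True"
| "reduced [a] = True"
| "reduced (a # b # w) = (\<not> (fst a = fst b \<and> snd a \<noteq> snd b) \<and> reduced (b # w))"

fun red_cons :: "('g \<times> bool) \<Rightarrow> ('g \<times> bool) list \<Rightarrow> ('g \<times> bool) list" where
  "red_cons a [] = [a]"
| "red_cons a (b # w) = (if fst a = fst b \<and> snd a \<noteq> snd b then w else a # b # w)"

definition fg_carrier :: "'g set \<Rightarrow> ('g \<times> bool) list set" where
  "fg_carrier S = {w. fst ` set w \<subseteq> S \<and> reduced w}"

definition fg_mult :: "('g \<times> bool) list \<Rightarrow> ('g \<times> bool) list \<Rightarrow> ('g \<times> bool) list" where
  "fg_mult u v = foldr red_cons u v"

definition fg_inv :: "('g \<times> bool) list \<Rightarrow> ('g \<times> bool) list" where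
  "fg_inv w = rev (map (\<lambda>(x, b). (x, \<not> b)) w)"

definition group_topology :: "'g set \<Rightarrow> ('g \<Rightarrow> 'g \<Rightarrow> 'g) \<Rightarrow> ('g \<Rightarrow> 'g) \<Rightarrow> 'g topology \<Rightarrow> bool" where
  "group_topology C mul iv T \<longleftrightarrow> topspace T = C \<and>
     continuous_map (prod_topology T T) T (\<lambda>(x, y). mul x y) \<and> continuous_map T T iv"

text \<open>Free (Markov) topological group F_M(S): the free group on the points of S with the
  finest group topology making the generator map x \<mapsto> x continuous (the join of all such
  group topologies).\<close>
definition markov_topology :: "'g topology \<Rightarrow> ('g \<times> bool) list topology" where
  "markov_topology S = topology_generated_by
     (\<Union>{{W. openin T W} | T. group_topology (fg_carrier (topspace S)) fg_mult fg_inv T \<and>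
                               continuous_map S T (\<lambda>x. [(x, True)])})"

definition word_eval :: "('g \<Rightarrow> 'g \<Rightarrow> 'g) \<Rightarrow> ('g \<Rightarrow> 'g) \<Rightarrow> 'g \<Rightarrow> ('g \<times> bool) list \<Rightarrow> 'g" where
  "word_eval mul iv one w = foldr (\<lambda>(x, b) acc. mul (if b then x else iv x) acc) w one"

text \<open>tau(G): G with the quotient topology w.r.t. the multiplication map m_G : F_M(G) \<rightarrow> G.\<close>
definition tau_top :: "'g topology \<Rightarrow> ('g \<Rightarrow> 'g \<Rightarrow> 'g) \<Rightarrow> ('g \<Rightarrow> 'g) \<Rightarrow> 'g \<Rightarrow> 'g topology" where
  "tau_top G mul iv one = quotient_top (markov_topology G) (word_eval mul iv one) (topspace G)"

definition pi1_tau :: "'a topology \<Rightarrow> 'a \<Rightarrow> (real \<Rightarrow> 'a) set topology" where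
  "pi1_tau X x0 = tau_top (pi1_qtop X x0) (pi1_mult X x0) (pi1_inv X x0) (pi1_one X x0)"

end

theory Submission
  imports Defs
begin

(* Proof idea.
   (1) <-> (2): tau never changes discreteness.  The generator map sigma : G -> F_M(G) is
   continuous and m_G o sigma = id, so every set open in tau(G) is open in G; hence tau(G)
   discrete implies G discrete.  Conversely, if G is discrete then the discrete topology on
   the free group is an admissible group topology, so F_M(G) is discrete, and so is its
   quotient tau(G).
   (2) <-> (3): the singletons of pi_1^qtop are open iff the homotopy classes are open in
   the loop space Omega.  Right translation g |-> g . rev p is continuous on Omega and pulls
   the class of the constant loop back to the class of p, so all classes are open as soon as
   the null class is open; and (3) says exactly that the null class is open. *)

subsection \<open>Quotient topologies and discreteness\<close>

lemma openin_quotient_top: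
  "openin (quotient_top T f Y) U \<longleftrightarrow> U \<subseteq> Y \<and> openin T {x \<in> topspace T. f x \<in> U}"
proof -
  have inter: "S \<inter> S' \<subseteq> Y \<and> openin T {x \<in> topspace T. f x \<in> S \<inter> S'}"
    if "S \<subseteq> Y \<and> openin T {x \<in> topspace T. f x \<in> S}"
       "S' \<subseteq> Y \<and> openin T {x \<in> topspace T. f x \<in> S'}" for S S'
  proof -
    have "{x \<in> topspace T. f x \<in> S \<inter> S'} =
        {x \<in> topspace T. f x \<in> S} \<inter> {x \<in> topspace T. f x \<in> S'}" by auto
    then show ?thesis using that by auto
  qed
  have union: "\<Union>K \<subseteq> Y \<and> openin T {x \<in> topspace T. f x \<in> \<Union>K}"
    if "\<forall>S\<in>K. S \<subseteq> Y \<and> openin T {x \<in> topspace T. f x \<in> S}" for K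
  proof -
    have "{x \<in> topspace T. f x \<in> \<Union>K} = (\<Union>S\<in>K. {x \<in> topspace T. f x \<in> S})" by auto
    then show ?thesis using that by auto
  qed
  have "istopology (\<lambda>U. U \<subseteq> Y \<and> openin T {x \<in> topspace T. f x \<in> U})"
    unfolding istopology_def using inter union by blast
  then show ?thesis unfolding quotient_top_def by (simp add: topology_inverse')
qed

lemma topspace_quotient_top:
  assumes "f ` topspace T \<subseteq> Y"
  shows "topspace (quotient_top T f Y) = Y"
proof -
  have "{x \<in> topspace T. f x \<in> Y} = topspace T" using assms by auto
  then have Y: "openin (quotient_top T f Y) Y" by (simp add: openin_quotient_top)
  have "topspace (quotient_top T f Y) \<subseteq> Y"
    using openin_topspace[of "quotient_top T f Y"] unfolding openin_quotient_top by (rule conjunct1)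
  then show ?thesis using openin_subset[OF Y] by blast
qed

lemma is_discrete_iff: "is_discrete T \<longleftrightarrow> (\<forall>U. U \<subseteq> topspace T \<longrightarrow> openin T U)"
  unfolding is_discrete_def topology_eq openin_discrete_topology
  using openin_subset by blast

lemma is_discrete_iff_singletons: "is_discrete T \<longleftrightarrow> (\<forall>x \<in> topspace T. openin T {x})"
  unfolding is_discrete_def by (metis discrete_topology_unique)

lemma quotient_top_discrete:
  assumes "is_discrete T" and "f ` topspace T \<subseteq> Y"
  shows "is_discrete (quotient_top T f Y)"
  using assms by (auto simp: is_discrete_iff topspace_quotient_top openin_quotient_top)

lemma quotient_top_open_imp_open:
  assumes s: "continuous_map G T s" and fs: "\<And>x. x \<in> topspace G \<Longrightarrow> f (s x) = x"
    and U: "openin (quotient_top T f (topspace G)) U"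
  shows "openin G U"
proof -
  have "openin T {w \<in> topspace T. f w \<in> U}" and "U \<subseteq> topspace G"
    using U by (auto simp: openin_quotient_top)
  then have "openin G {x \<in> topspace G. s x \<in> {w \<in> topspace T. f w \<in> U}}"
    using openin_continuous_map_preimage[OF s] by blast
  moreover have "{x \<in> topspace G. s x \<in> {w \<in> topspace T. f w \<in> U}} = U"
  proof -
    have "s x \<in> topspace T" if "x \<in> topspace G" for x
      using that continuous_map_image_subset_topspace[OF s] by blast
    then show ?thesis using \<open>U \<subseteq> topspace G\<close> fs by force
  qed
  ultimately show ?thesis by simp
qed

text \<open>Reduced words are closed under the group operations of the free group; this is what makes
  the discrete and indiscrete topologies on the free group group topologies.\<close>
lemma reduced_tl: "reduced (a # w) \<Longrightarrow> reduced w"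
  by (cases w) auto

lemma reduced_red_cons: "reduced w \<Longrightarrow> reduced (red_cons a w)"
  by (cases w) (auto dest: reduced_tl)

lemma letters_red_cons: "fst ` set (red_cons a w) \<subseteq> insert (fst a) (fst ` set w)"
  by (cases w) auto

lemma fg_mult_closed:
  assumes "u \<in> fg_carrier S" and "v \<in> fg_carrier S"
  shows "fg_mult u v \<in> fg_carrier S"
proof -
  have "fst ` set u \<subseteq> S \<Longrightarrow> foldr red_cons u v \<in> fg_carrier S" for u
  proof (induction u)
    case (Cons a u)
    then have "fst a \<in> S" and "foldr red_cons u v \<in> fg_carrier S" by simp_all
    then have IH: "reduced (foldr red_cons u v)" "fst ` set (foldr red_cons u v) \<subseteq> S"
      by (simp_all add: fg_carrier_def)
    have "insert (fst a) (fst ` set (foldr red_cons u v)) \<subseteq> S"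
      using IH(2) \<open>fst a \<in> S\<close> by simp
    then have "fst ` set (red_cons a (foldr red_cons u v)) \<subseteq> S"
      by (rule order_trans[OF letters_red_cons])
    then show ?case using reduced_red_cons[OF IH(1)] by (simp add: fg_carrier_def)
  qed (use assms(2) in simp)
  then show ?thesis using assms(1) by (simp add: fg_mult_def fg_carrier_def)
qed

lemma reduced_snoc:
  "reduced (w @ [a]) \<longleftrightarrow> reduced w \<and> (w \<noteq> [] \<longrightarrow> \<not> (fst (last w) = fst a \<and> snd (last w) \<noteq> snd a))"
  by (induction w rule: reduced.induct) auto

lemma reduced_fg_inv: "reduced w \<Longrightarrow> reduced (fg_inv w)"
proof (induction w rule: reduced.induct)
  case (2 a)
  then show ?case by (cases a) (simp add: fg_inv_def)
next
  case (3 a b w)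
  let ?flip = "\<lambda>(x, b). (x, \<not> b)"
  have "reduced (fg_inv (b # w))" using 3 by simp
  moreover have "fg_inv (a # b # w) = fg_inv (b # w) @ [?flip a]"
    and "last (fg_inv (b # w)) = ?flip b" by (simp_all add: fg_inv_def)
  ultimately show ?case using "3.prems"
    by (cases a; cases b) (simp add: reduced_snoc fg_inv_def del: rev.simps list.map)
qed (simp add: fg_inv_def)

lemma fg_inv_closed: "u \<in> fg_carrier S \<Longrightarrow> fg_inv u \<in> fg_carrier S"
  using reduced_fg_inv by (force simp: fg_carrier_def fg_inv_def)

subsection \<open>Group topologies and the Markov topology\<close>

lemma group_topology_discrete:
  assumes "\<And>x y. x \<in> C \<Longrightarrow> y \<in> C \<Longrightarrow> mul x y \<in> C" and "\<And>x. x \<in> C \<Longrightarrow> iv x \<in> C"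
  shows "group_topology C mul iv (discrete_topology C)"
  using assms by (auto simp: group_topology_def simp flip: prod_topology_discrete_topology)

lemma continuous_map_indiscrete:
  assumes "f ` topspace A \<subseteq> C"
  shows "continuous_map A (topology_generated_by {C}) f"
proof -
  have "f -` C \<inter> topspace A = topspace A" using assms by auto
  then show ?thesis using assms by (simp add: continuous_on_generated_topo_iff)
qed

lemma group_topology_indiscrete:
  assumes "\<And>x y. x \<in> C \<Longrightarrow> y \<in> C \<Longrightarrow> mul x y \<in> C" and "\<And>x. x \<in> C \<Longrightarrow> iv x \<in> C"
  shows "group_topology C mul iv (topology_generated_by {C})"
  using assms by (auto simp: group_topology_def intro!: continuous_map_indiscrete)

definition markov_admissible :: "'g topology \<Rightarrow> ('g \<times> bool) list topology \<Rightarrow> bool" where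
  "markov_admissible S T \<longleftrightarrow> group_topology (fg_carrier (topspace S)) fg_mult fg_inv T \<and>
     continuous_map S T (\<lambda>x. [(x, True)])"

lemma markov_topology_alt:
  "markov_topology S = topology_generated_by {W. \<exists>T. markov_admissible S T \<and> openin T W}"
  unfolding markov_topology_def markov_admissible_def
  by (rule arg_cong[where f = topology_generated_by]) blast

lemma openin_markov_topology:
  "markov_admissible S T \<Longrightarrow> openin T W \<Longrightarrow> openin (markov_topology S) W"
  unfolding markov_topology_alt by (rule topology_generated_by_Basis) blast

lemma markov_admissible_indiscrete:
  "markov_admissible S (topology_generated_by {fg_carrier (topspace S)})"
  unfolding markov_admissible_def
  by (intro conjI group_topology_indiscrete continuous_map_indiscrete fg_mult_closed fg_inv_closed)
    (auto simp: fg_carrier_def)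

lemma topspace_markov_topology: "topspace (markov_topology S) = fg_carrier (topspace S)"
proof -
  let ?C = "fg_carrier (topspace S)"
  have "W \<subseteq> ?C" if "markov_admissible S T" "openin T W" for T W
    using that openin_subset by (fastforce simp: markov_admissible_def group_topology_def)
  moreover have "openin (topology_generated_by {?C}) ?C"
    by (rule topology_generated_by_Basis) simp
  ultimately have "\<Union>{W. \<exists>T. markov_admissible S T \<and> openin T W} = ?C"
    using markov_admissible_indiscrete[of S] by blast
  then show ?thesis by (simp add: markov_topology_alt)
qed

lemma continuous_map_generator: "continuous_map S (markov_topology S) (\<lambda>x. [(x, True)])"
  unfolding continuous_map_def
proof (intro conjI allI impI)
  show "(\<lambda>x. [(x, True)]) \<in> topspace S \<rightarrow> topspace (markov_topology S)"
    by (auto simp: topspace_markov_topology fg_carrier_def)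
  fix U assume "openin (markov_topology S) U"
  then have "generate_topology_on {W. \<exists>T. markov_admissible S T \<and> openin T W} U"
    unfolding markov_topology_alt by (rule openin_topology_generated_by)
  then show "openin S {x \<in> topspace S. [(x, True)] \<in> U}"
  proof induction
    case (Int a b)
    have "{x \<in> topspace S. [(x, True)] \<in> a \<inter> b} =
        {x \<in> topspace S. [(x, True)] \<in> a} \<inter> {x \<in> topspace S. [(x, True)] \<in> b}" by auto
    then show ?case using Int by auto
  next
    case (UN K)
    have "{x \<in> topspace S. [(x, True)] \<in> \<Union>K} = (\<Union>k\<in>K. {x \<in> topspace S. [(x, True)] \<in> k})" by auto
    then show ?case using UN by auto
  next
    case (Basis W)
    then show ?case
      by (auto simp: markov_admissible_def intro: openin_continuous_map_preimage)
  qed simp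
qed

lemma markov_topology_discrete:
  assumes "is_discrete S"
  shows "is_discrete (markov_topology S)"
proof -
  let ?C = "fg_carrier (topspace S)"
  have S: "S = discrete_topology (topspace S)" using assms by (simp add: is_discrete_def)
  have "continuous_map S (discrete_topology ?C) (\<lambda>x. [(x, True)])"
    by (subst S) (auto simp: fg_carrier_def)
  then have "markov_admissible S (discrete_topology ?C)"
    by (auto simp: markov_admissible_def intro!: group_topology_discrete fg_mult_closed fg_inv_closed)
  then show ?thesis
    by (auto simp: is_discrete_iff topspace_markov_topology intro: openin_markov_topology)
qed

lemma tau_top_discrete_iff:
  assumes closed: "\<And>w. w \<in> fg_carrier (topspace G) \<Longrightarrow> word_eval mul iv one w \<in> topspace G"
    and unit: "\<And>x. x \<in> topspace G \<Longrightarrow> mul x one = x"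
  shows "is_discrete (tau_top G mul iv one) \<longleftrightarrow> is_discrete G"
proof -
  have image: "word_eval mul iv one ` topspace (markov_topology G) \<subseteq> topspace G"
    using closed by (auto simp: topspace_markov_topology)
  have top: "topspace (tau_top G mul iv one) = topspace G"
    unfolding tau_top_def by (rule topspace_quotient_top[OF image])
  show ?thesis
  proof
    assume discrete: "is_discrete (tau_top G mul iv one)"
    have "openin G U" if U: "U \<subseteq> topspace G" for U
    proof (rule quotient_top_open_imp_open[OF continuous_map_generator])
      show "word_eval mul iv one [(x, True)] = x" if "x \<in> topspace G" for x
        using that by (simp add: word_eval_def unit)
      show "openin (quotient_top (markov_topology G) (word_eval mul iv one) (topspace G)) U"
        using discrete U top unfolding is_discrete_iff tau_top_def by simp
    qed
    then show "is_discrete G" by (simp add: is_discrete_iff)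
  next
    assume "is_discrete G"
    then show "is_discrete (tau_top G mul iv one)"
      unfolding tau_top_def by (rule quotient_top_discrete[OF markov_topology_discrete image])
  qed
qed

subsection \<open>Homotopies of loops\<close>

lemma loopsD:
  assumes "g \<in> loops X x0"
  shows "g 0 = x0" "g 1 = x0" "g \<in> extensional {0..1}"
    and "continuous_map (top_of_set {0..1}) X g"
  using assms by (auto simp: loops_def pathin_def)

lemma continuous_map_top_of_set:
  "continuous_on S f \<Longrightarrow> f ` S \<subseteq> T \<Longrightarrow> continuous_map (top_of_set S) (top_of_set T) f"
  by (simp add: continuous_map_in_subtopology image_subset_iff_funcset)

text \<open>A homotopy may be given by a map on the square that only agrees with the two loops on
  the parameter interval; this is how all homotopies below are built.\<close>
lemma homotopic_rel_endsI:
  fixes K :: "real \<times> real \<Rightarrow> 'a" and p q :: "real \<Rightarrow> 'a"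
  assumes K: "continuous_map (top_of_set ({0..1} \<times> {0..1})) X K"
    and K0: "\<And>t. t \<in> {0..1} \<Longrightarrow> K (0, t) = p t"
    and K1: "\<And>t. t \<in> {0..1} \<Longrightarrow> K (1, t) = q t"
    and ends: "\<And>s. s \<in> {0..1} \<Longrightarrow> K (s, 0) = x0 \<and> K (s, 1) = x0"
  shows "homotopic_rel_ends X x0 p q"
  unfolding homotopic_rel_ends_def homotopic_with_def
proof (intro exI conjI allI ballI)
  let ?h = "\<lambda>(s::real, t::real). if s = 0 then p t else if s = 1 then q t else K (s, t)"
  show "continuous_map (prod_topology (top_of_set {0..1}) (top_of_set {0..1})) X ?h"
    unfolding prod_topology_subtopology_eu by (rule continuous_map_eq[OF K]) (auto simp: K0 K1)
qed (use K0[of 0] K0[of 1] K1[of 0] K1[of 1] ends in auto)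

lemma homotopic_rel_endsE:
  fixes p q :: "real \<Rightarrow> 'a"
  assumes "homotopic_rel_ends X x0 p q"
  obtains H where "continuous_map (top_of_set ({0..1::real} \<times> {0..1::real})) X H"
    "\<And>t. H (0, t) = p t" "\<And>t. H (1, t) = q t"
    "\<And>s. s \<in> {0..1} \<Longrightarrow> H (s, 0) = x0 \<and> H (s, 1) = x0"
proof -
  obtain h :: "real \<times> real \<Rightarrow> 'a"
    where "continuous_map (top_of_set ({0..1::real} \<times> {0..1::real})) X h"
    "\<forall>t. h (0, t) = p t" "\<forall>t. h (1, t) = q t" "\<forall>s\<in>{0..1}. h (s, 0) = x0 \<and> h (s, 1) = x0"
    using assms unfolding homotopic_rel_ends_def homotopic_with_def prod_topology_subtopology_eu
    by blast
  then show ?thesis using that[of h] by auto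
qed

lemma homotopic_rel_ends_refl: "g \<in> loops X x0 \<Longrightarrow> homotopic_rel_ends X x0 g g"
  by (auto simp: homotopic_rel_ends_def loops_def pathin_def)

lemma homotopic_rel_ends_sym: "homotopic_rel_ends X x0 p q \<Longrightarrow> homotopic_rel_ends X x0 q p"
  unfolding homotopic_rel_ends_def by (rule homotopic_with_symD)

lemma homotopic_rel_ends_trans:
  "homotopic_rel_ends X x0 p q \<Longrightarrow> homotopic_rel_ends X x0 q r \<Longrightarrow> homotopic_rel_ends X x0 p r"
  unfolding homotopic_rel_ends_def by (rule homotopic_with_trans)

text \<open>Concatenation respects homotopy: glue the two homotopies side by side.\<close>
lemma loop_join_homotopic:
  fixes p p' q q' :: "real \<Rightarrow> 'a"
  assumes "homotopic_rel_ends X x0 p p'" and "homotopic_rel_ends X x0 q q'"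
  shows "homotopic_rel_ends X x0 (loop_join p q) (loop_join p' q')"
proof -
  let ?S = "{0..1::real} \<times> {0..1::real}"
  obtain P :: "real \<times> real \<Rightarrow> 'a" where P: "continuous_map (top_of_set ?S) X P"
    "\<And>t. P (0, t) = p t" "\<And>t. P (1, t) = p' t" "\<And>s. s \<in> {0..1} \<Longrightarrow> P (s, 0) = x0 \<and> P (s, 1) = x0"
    using homotopic_rel_endsE[OF assms(1)] by blast
  obtain Q :: "real \<times> real \<Rightarrow> 'a" where Q: "continuous_map (top_of_set ?S) X Q"
    "\<And>t. Q (0, t) = q t" "\<And>t. Q (1, t) = q' t" "\<And>s. s \<in> {0..1} \<Longrightarrow> Q (s, 0) = x0 \<and> Q (s, 1) = x0"
    using homotopic_rel_endsE[OF assms(2)] by blast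
  let ?P = "P \<circ> (\<lambda>x. (fst x, 2 * snd x))" and ?Q = "Q \<circ> (\<lambda>x. (fst x, 2 * snd x - 1))"
  have left: "continuous_map (top_of_set (?S \<inter> {x. snd x \<le> 1/2})) X ?P"
    by (rule continuous_map_compose[OF continuous_map_top_of_set P(1)])
      (auto intro!: continuous_intros)
  have right: "continuous_map (top_of_set (?S \<inter> {x. 1/2 \<le> snd x})) X ?Q"
    by (rule continuous_map_compose[OF continuous_map_top_of_set Q(1)])
      (auto intro!: continuous_intros)
  have "continuous_map (top_of_set ?S) X (\<lambda>x. if snd x \<le> 1/2 then ?P x else ?Q x)"
  proof (rule continuous_map_cases_le)
    show "continuous_map (top_of_set ?S) euclideanreal snd"
      by (simp add: continuous_on_snd)
    show "continuous_map (subtopology (top_of_set ?S) {x \<in> topspace (top_of_set ?S). snd x \<le> 1/2}) X ?P"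
      using left by (simp add: subtopology_subtopology Collect_conj_eq Int_assoc)
    show "continuous_map (subtopology (top_of_set ?S) {x \<in> topspace (top_of_set ?S). 1/2 \<le> snd x}) X ?Q"
      using right by (simp add: subtopology_subtopology Collect_conj_eq Int_assoc)
  next
    fix x assume "x \<in> topspace (top_of_set ?S)" "snd x = 1/2"
    then have "2 * snd x = 1" "2 * snd x - 1 = 0" "fst x \<in> {0..1}" by auto
    then show "?P x = ?Q x" by (simp add: P Q)
  qed simp
  then show ?thesis
    by (rule homotopic_rel_endsI) (auto simp: loop_join_def P Q)
qed

lemma loop_join_loops:
  assumes "p \<in> loops X x0" "q \<in> loops X x0"
  shows "loop_join p q \<in> loops X x0"
proof -
  have "homotopic_rel_ends X x0 (loop_join p q) (loop_join p q)"
    by (intro loop_join_homotopic homotopic_rel_ends_refl assms)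
  then have "continuous_map (top_of_set {0..1}) X (loop_join p q)"
    unfolding homotopic_rel_ends_def by (rule homotopic_with_imp_continuous_maps[THEN conjunct1])
  then show ?thesis using loopsD[OF assms(1)] loopsD[OF assms(2)]
    by (auto simp: loops_def pathin_def loop_join_def)
qed

lemma loop_rev_loops:
  assumes "p \<in> loops X x0"
  shows "loop_rev p \<in> loops X x0"
proof -
  have "continuous_map (top_of_set {0..1}) X (p \<circ> (\<lambda>t. 1 - t))"
    by (rule continuous_map_compose[OF continuous_map_top_of_set loopsD(4)[OF assms]])
      (auto intro!: continuous_intros)
  then have "continuous_map (top_of_set {0..1}) X (loop_rev p)"
    by (rule continuous_map_eq) (auto simp: loop_rev_def)
  then show ?thesis using loopsD[OF assms]
    by (auto simp: loops_def pathin_def loop_rev_def)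
qed

lemma const_loop_loops:
  assumes "x0 \<in> topspace X"
  shows "const_loop x0 \<in> loops X x0"
proof -
  have "continuous_map (top_of_set {0..1}) X (const_loop x0)"
    by (rule continuous_map_eq[of _ _ "\<lambda>t. x0"]) (auto simp: assms const_loop_def)
  then show ?thesis by (auto simp: loops_def pathin_def const_loop_def)
qed

lemma homotopic_rel_ends_reparam:
  fixes s :: "real \<times> real \<Rightarrow> real"
  assumes p: "p \<in> loops X x0"
    and s: "continuous_on ({0..1} \<times> {0..1}) s" "s ` ({0..1} \<times> {0..1}) \<subseteq> {0..1}"
    and ends: "\<And>u. u \<in> {0..1} \<Longrightarrow> s (u, 0) \<in> {0, 1} \<and> s (u, 1) \<in> {0, 1}"
    and q: "\<And>t. t \<in> {0..1} \<Longrightarrow> q t = p (s (0, t))"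
    and r: "\<And>t. t \<in> {0..1} \<Longrightarrow> r t = p (s (1, t))"
  shows "homotopic_rel_ends X x0 q r"
proof (rule homotopic_rel_endsI)
  show "continuous_map (top_of_set ({0..1} \<times> {0..1})) X (p \<circ> s)"
    by (rule continuous_map_compose[OF continuous_map_top_of_set[OF s] loopsD(4)[OF p]])
next
  fix u :: real assume "u \<in> {0..1}"
  then show "(p \<circ> s) (u, 0) = x0 \<and> (p \<circ> s) (u, 1) = x0"
    using ends[of u] loopsD(1,2)[OF p] by auto
qed (use q r in auto)

text \<open>The constant loop is a right unit: slide the break point from 1/2 to 1.\<close>
lemma loop_join_const_right:
  assumes p: "p \<in> loops X x0"
  shows "homotopic_rel_ends X x0 (loop_join p (const_loop x0)) p"
proof -
  let ?s = "\<lambda>x::real \<times> real. (1 - fst x) * min (2 * snd x) 1 + fst x * snd x"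
  have "continuous_on ({0..1} \<times> {0..1}) ?s" by (intro continuous_intros)
  moreover have "?s (a, b) \<in> {0..1}" if "a \<in> {0..1}" "b \<in> {0..1}" for a b
  proof -
    have "(1 - a) * min (2 * b) 1 \<le> (1 - a) * 1" "a * b \<le> a * 1"
      using that by (intro mult_left_mono; auto)+
    then show ?thesis using that by auto
  qed
  then have "?s ` ({0..1} \<times> {0..1}) \<subseteq> {0..1}" by auto
  ultimately show ?thesis
    by (rule homotopic_rel_ends_reparam[OF p])
      (use loopsD[OF p] in \<open>auto simp: loop_join_def const_loop_def min_def\<close>)
qed

text \<open>A loop followed by its reverse is null-homotopic: retract along the loop.\<close>
lemma loop_join_rev_right:
  assumes p: "p \<in> loops X x0"
  shows "homotopic_rel_ends X x0 (loop_join p (loop_rev p)) (const_loop x0)"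
proof -
  let ?s = "\<lambda>x::real \<times> real. (1 - fst x) * min (2 * snd x) (2 - 2 * snd x)"
  have "continuous_on ({0..1} \<times> {0..1}) ?s" by (intro continuous_intros)
  moreover have "?s (a, b) \<in> {0..1}" if "a \<in> {0..1}" "b \<in> {0..1}" for a b
  proof -
    have "(1 - a) * min (2 * b) (2 - 2 * b) \<le> 1 * 1"
      using that by (intro mult_mono) auto
    then show ?thesis using that by auto
  qed
  then have "?s ` ({0..1} \<times> {0..1}) \<subseteq> {0..1}" by auto
  ultimately show ?thesis
    by (rule homotopic_rel_ends_reparam[OF p])
      (use loopsD[OF p] in \<open>auto simp: loop_join_def loop_rev_def const_loop_def min_def\<close>)
qed

text \<open>A null-homotopy
  H of g . rev b is restricted to a path in the square that runs along the left half of the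
  bottom edge (tracing g), then up the middle and back along the right half of the top edge
  (tracing b backwards); shrinking this path gives the homotopy from g to b.\<close>
lemma homotopic_rel_ends_cancel:
  fixes g b :: "real \<Rightarrow> 'a"
  assumes g: "g \<in> loops X x0" and b: "b \<in> loops X x0"
    and null: "homotopic_rel_ends X x0 (loop_join g (loop_rev b)) (const_loop x0)"
  shows "homotopic_rel_ends X x0 g b"
proof -
  let ?S = "{0..1::real} \<times> {0..1::real}"
  obtain H :: "real \<times> real \<Rightarrow> 'a" where H: "continuous_map (top_of_set ?S) X H"
    "\<And>t. H (0, t) = loop_join g (loop_rev b) t" "\<And>t. H (1, t) = const_loop x0 t"
    "\<And>s. s \<in> {0..1} \<Longrightarrow> H (s, 0) = x0 \<and> H (s, 1) = x0"
    using homotopic_rel_endsE[OF null] by blast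
  let ?s = "\<lambda>x::real\<times>real. ((1 - snd x) * min (3 * fst x) (min 1 (3 - 3 * fst x)),
              snd x / 2 + (1 - snd x) * max 0 (min 1 (3 * fst x - 1)))"
  have "?s x \<in> ?S" if xS: "x \<in> ?S" for x
  proof -
    obtain u t where x: "x = (u, t)" "0 \<le> u" "u \<le> 1" "0 \<le> t" "t \<le> 1"
      using xS by (cases x) auto
    have m: "0 \<le> min (3 * u) (min 1 (3 - 3 * u))" "min (3 * u) (min 1 (3 - 3 * u)) \<le> 1"
      "0 \<le> max 0 (min 1 (3 * u - 1))" "max 0 (min 1 (3 * u - 1)) \<le> 1"
      using x by auto
    have "(1 - t) * min (3 * u) (min 1 (3 - 3 * u)) \<le> 1 * 1"
      using x m by (intro mult_mono) auto
    moreover have "(1 - t) * max 0 (min 1 (3 * u - 1)) \<le> (1 - t) * 1"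
      using x m by (intro mult_left_mono) auto
    ultimately show ?thesis using x m by auto
  qed
  then have K: "continuous_map (top_of_set ?S) X (H \<circ> ?s)"
    by (intro continuous_map_compose[OF continuous_map_top_of_set H(1)])
      (auto intro!: continuous_intros)
  show ?thesis
  proof (rule homotopic_rel_endsI[OF K])
    fix t :: real assume t: "t \<in> {0..1}"
    show "(H \<circ> ?s) (0, t) = g t"
      using t by (auto simp: H loop_join_def)
    show "(H \<circ> ?s) (1, t) = b t"
    proof (cases "t = 1")
      case True then show ?thesis using loopsD[OF g] loopsD[OF b] by (auto simp: H loop_join_def)
    next
      case False
      then have "?s (1, t) = (0, 1 - t/2)" and "\<not> 1 - t/2 \<le> 1/2" using t by auto
      then show ?thesis using t by (auto simp: H loop_join_def loop_rev_def)
    qed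
  next
    fix u :: real assume u: "u \<in> {0..1}"
    have "?s (u, 1) = (0, 1/2)" by simp
    then have top: "(H \<circ> ?s) (u, 1) = x0"
      using loopsD[OF g] by (simp add: H loop_join_def)
    consider "u \<le> 1/3" | "1/3 < u" "u \<le> 2/3" | "2/3 < u" by linarith
    then have "(H \<circ> ?s) (u, 0) = x0"
    proof cases
      case 1
      then have "?s (u, 0) = (3 * u, 0)" and "3 * u \<in> {0..1}" using u by auto
      then show ?thesis by (simp add: H)
    next
      case 2
      then have "?s (u, 0) = (1, 3 * u - 1)" and "3 * u - 1 \<in> {0..1}" using u by auto
      then show ?thesis by (simp add: H const_loop_def)
    next
      case 3
      then have "?s (u, 0) = (3 - 3 * u, 1)" and "3 - 3 * u \<in> {0..1}" using u by auto
      then show ?thesis by (simp add: H)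
    qed
    with top show "(H \<circ> ?s) (u, 0) = x0 \<and> (H \<circ> ?s) (u, 1) = x0" by simp
  qed
qed

text \<open>The subbasic set for K = {} is the whole set of loops.\<close>
lemma topspace_loop_space: "topspace (loop_space X x0) = loops X x0"
proof -
  have "{g \<in> loops X x0. g ` {} \<subseteq> topspace X} \<in>
     {{g \<in> loops X x0. g ` K \<subseteq> U} | K U. compact K \<and> K \<subseteq> {0..1} \<and> openin X U}"
    by blast
  then show ?thesis unfolding loop_space_def by auto
qed

text \<open>Right translation g |-> g . d by a fixed loop d is continuous on the loop space: the
  condition (g . d)(K) \<subseteq> U splits into a condition on g over the rescaled left half of K and
  a fixed condition on d.\<close>
lemma continuous_map_loop_join_right:
  assumes d: "d \<in> loops X x0"
  shows "continuous_map (loop_space X x0) (loop_space X x0) (\<lambda>g. loop_join g d)"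
  unfolding loop_space_def continuous_on_generated_topo_iff
proof (intro conjI allI impI)
  let ?B = "{{g \<in> loops X x0. g ` K \<subseteq> U} | K U. compact K \<and> K \<subseteq> {0..1} \<and> openin X U}"
  have top: "\<Union>?B = loops X x0"
    using topspace_loop_space[of X x0] by (simp add: loop_space_def)
  then show "(\<lambda>g. loop_join g d) ` topspace (topology_generated_by ?B) \<subseteq> \<Union>?B"
    using loop_join_loops[OF _ d] by auto
  fix W assume "W \<in> ?B"
  then obtain K U where W: "W = {g \<in> loops X x0. g ` K \<subseteq> U}"
    and K: "compact K" "K \<subseteq> {0..1}" and U: "openin X U" by blast
  define K1 where "K1 = (\<lambda>t. 2 * t) ` (K \<inter> {..1/2})"
  define K2 where "K2 = (\<lambda>t. 2 * t - 1) ` (K \<inter> {t. \<not> t \<le> 1/2})"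
  have "compact K1"
    unfolding K1_def
    by (intro compact_continuous_image compact_Int_closed K(1)) (auto intro!: continuous_intros)
  moreover have "K1 \<subseteq> {0..1}" using K(2) by (auto simp: K1_def)
  ultimately have basic: "{g \<in> loops X x0. g ` K1 \<subseteq> U} \<in> ?B" using U by blast
  have "loop_join g d ` K \<subseteq> U \<longleftrightarrow> g ` K1 \<subseteq> U \<and> d ` K2 \<subseteq> U" for g
    using K(2) unfolding K1_def K2_def loop_join_def by (auto simp: subset_iff)
  then have "(\<lambda>g. loop_join g d) -` W \<inter> loops X x0 =
      (if d ` K2 \<subseteq> U then {g \<in> loops X x0. g ` K1 \<subseteq> U} else {})"
    using loop_join_loops[OF _ d] by (auto simp: W)
  then show "openin (topology_generated_by ?B)
      ((\<lambda>g. loop_join g d) -` W \<inter> topspace (topology_generated_by ?B))"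
    using topology_generated_by_Basis[OF basic] by (cases "d ` K2 \<subseteq> U") (simp_all add: top)
qed

subsection \<open>Homotopy classes and the fundamental group\<close>

lemma mem_loop_class: "q \<in> loop_class X x0 p \<longleftrightarrow> q \<in> loops X x0 \<and> homotopic_rel_ends X x0 p q"
  by (simp add: loop_class_def)

lemma loop_class_eq_iff:
  assumes "p \<in> loops X x0" "q \<in> loops X x0"
  shows "loop_class X x0 p = loop_class X x0 q \<longleftrightarrow> homotopic_rel_ends X x0 p q"
proof
  assume "loop_class X x0 p = loop_class X x0 q"
  moreover have "q \<in> loop_class X x0 q"
    using assms homotopic_rel_ends_refl by (auto simp: loop_class_def)
  ultimately show "homotopic_rel_ends X x0 p q" by (auto simp: loop_class_def)
next
  assume pq: "homotopic_rel_ends X x0 p q"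
  have "homotopic_rel_ends X x0 p r \<longleftrightarrow> homotopic_rel_ends X x0 q r" for r
    using homotopic_rel_ends_trans[OF pq, of r] homotopic_rel_ends_trans[OF homotopic_rel_ends_sym[OF pq], of r]
    by blast
  then show "loop_class X x0 p = loop_class X x0 q"
    by (simp add: loop_class_def)
qed

lemma pi1_carrier_representative:
  assumes "A \<in> pi1_carrier X x0"
  shows "(SOME p. p \<in> A) \<in> loops X x0" and "A = loop_class X x0 (SOME p. p \<in> A)"
proof -
  obtain a where a: "a \<in> loops X x0" "A = loop_class X x0 a"
    using assms by (auto simp: pi1_carrier_def)
  then have "a \<in> A" using homotopic_rel_ends_refl by (auto simp: loop_class_def)
  then have "(SOME p. p \<in> A) \<in> A" by (rule someI[where P = "\<lambda>p. p \<in> A"])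
  then show rep: "(SOME p. p \<in> A) \<in> loops X x0"
    and "A = loop_class X x0 (SOME p. p \<in> A)"
    using a loop_class_eq_iff[OF a(1)] by (auto simp: loop_class_def)
qed

lemma pi1_mult_class:
  assumes "p \<in> loops X x0" "q \<in> loops X x0"
  shows "pi1_mult X x0 (loop_class X x0 p) (loop_class X x0 q) = loop_class X x0 (loop_join p q)"
proof -
  let ?p' = "SOME p'. p' \<in> loop_class X x0 p" and ?q' = "SOME q'. q' \<in> loop_class X x0 q"
  have cls: "loop_class X x0 p \<in> pi1_carrier X x0" "loop_class X x0 q \<in> pi1_carrier X x0"
    using assms by (auto simp: pi1_carrier_def)
  have "homotopic_rel_ends X x0 p ?p'" "homotopic_rel_ends X x0 q ?q'"
    using pi1_carrier_representative[OF cls(1)] pi1_carrier_representative[OF cls(2)] assms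
    by (simp_all add: loop_class_eq_iff)
  then have "homotopic_rel_ends X x0 ?p' p" "homotopic_rel_ends X x0 ?q' q"
    by (simp_all add: homotopic_rel_ends_sym)
  then have "homotopic_rel_ends X x0 (loop_join ?p' ?q') (loop_join p q)"
    by (rule loop_join_homotopic)
  then show ?thesis
    using assms pi1_carrier_representative(1)[OF cls(1)] pi1_carrier_representative(1)[OF cls(2)]
    by (simp add: pi1_mult_def loop_class_eq_iff loop_join_loops)
qed

lemma pi1_mult_closed:
  assumes "A \<in> pi1_carrier X x0" "B \<in> pi1_carrier X x0"
  shows "pi1_mult X x0 A B \<in> pi1_carrier X x0"
  using loop_join_loops[OF pi1_carrier_representative(1)[OF assms(1)]
      pi1_carrier_representative(1)[OF assms(2)]]
  by (simp add: pi1_mult_def pi1_carrier_def)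

lemma pi1_inv_closed:
  assumes "A \<in> pi1_carrier X x0"
  shows "pi1_inv X x0 A \<in> pi1_carrier X x0"
  using loop_rev_loops[OF pi1_carrier_representative(1)[OF assms]]
  by (simp add: pi1_inv_def pi1_carrier_def)

lemma pi1_one_closed: "x0 \<in> topspace X \<Longrightarrow> pi1_one X x0 \<in> pi1_carrier X x0"
  by (simp add: pi1_one_def pi1_carrier_def const_loop_loops)

lemma pi1_right_unit:
  assumes x0: "x0 \<in> topspace X" and A: "A \<in> pi1_carrier X x0"
  shows "pi1_mult X x0 A (pi1_one X x0) = A"
proof -
  obtain p where p: "p \<in> loops X x0" "A = loop_class X x0 p"
    using A by (auto simp: pi1_carrier_def)
  have "pi1_mult X x0 A (pi1_one X x0) = loop_class X x0 (loop_join p (const_loop x0))"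
    using p const_loop_loops[OF x0] by (simp add: pi1_one_def pi1_mult_class)
  also have "\<dots> = A"
    using p loop_join_const_right[OF p(1)] const_loop_loops[OF x0]
    by (simp add: loop_class_eq_iff loop_join_loops)
  finally show ?thesis .
qed

lemma pi1_word_eval_closed:
  assumes x0: "x0 \<in> topspace X"
  shows "w \<in> fg_carrier (pi1_carrier X x0) \<Longrightarrow>
    word_eval (pi1_mult X x0) (pi1_inv X x0) (pi1_one X x0) w \<in> pi1_carrier X x0"
proof (induction w)
  case Nil
  then show ?case by (simp add: word_eval_def pi1_one_closed x0)
next
  case (Cons a w)
  obtain x b where a: "a = (x, b)" by (cases a)
  have "w \<in> fg_carrier (pi1_carrier X x0)" and x: "x \<in> pi1_carrier X x0"
    using Cons.prems a by (auto simp: fg_carrier_def dest: reduced_tl)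
  with Cons.IH show ?case
    by (cases b) (simp_all add: word_eval_def a pi1_mult_closed pi1_inv_closed)
qed

lemma topspace_pi1_qtop: "topspace (pi1_qtop X x0) = pi1_carrier X x0"
  unfolding pi1_qtop_def
  by (rule topspace_quotient_top) (auto simp: topspace_loop_space pi1_carrier_def)

text \<open>A singleton of pi_1 is open exactly when the corresponding class is open in the loop
  space, since the class is its own preimage.\<close>
lemma pi1_qtop_discrete_iff:
  "is_discrete (pi1_qtop X x0) \<longleftrightarrow> (\<forall>p \<in> loops X x0. openin (loop_space X x0) (loop_class X x0 p))"
proof -
  have preimage: "{g \<in> topspace (loop_space X x0). loop_class X x0 g \<in> {loop_class X x0 p}} =
      loop_class X x0 p" if p: "p \<in> loops X x0" for p
  proof -
    have "loop_class X x0 g = loop_class X x0 p \<longleftrightarrow> homotopic_rel_ends X x0 p g"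
      if "g \<in> loops X x0" for g
      using loop_class_eq_iff[OF that p] homotopic_rel_ends_sym[of X x0 g p]
        homotopic_rel_ends_sym[of X x0 p g] by blast
    then show ?thesis
      unfolding set_eq_iff mem_loop_class topspace_loop_space mem_Collect_eq singleton_iff by blast
  qed
  have "openin (pi1_qtop X x0) {loop_class X x0 p} \<longleftrightarrow>
      openin (loop_space X x0) (loop_class X x0 p)" if "p \<in> loops X x0" for p
    unfolding pi1_qtop_def openin_quotient_top preimage[OF that]
    using that by (simp add: pi1_carrier_def)
  then show ?thesis
    by (simp add: is_discrete_iff_singletons topspace_pi1_qtop pi1_carrier_def)
qed

text \<open>Translation argument: right translation by rev p pulls the null class back to the class
  of p, so openness of the null class propagates to every class.\<close>
lemma loop_class_open_from_null_class:
  assumes null: "openin (loop_space X x0) (loop_class X x0 (const_loop x0))"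
    and p: "p \<in> loops X x0"
  shows "openin (loop_space X x0) (loop_class X x0 p)"
proof -
  have "homotopic_rel_ends X x0 p g \<longleftrightarrow>
      homotopic_rel_ends X x0 (const_loop x0) (loop_join g (loop_rev p))"
    if g: "g \<in> loops X x0" for g
  proof
    assume "homotopic_rel_ends X x0 p g"
    then have "homotopic_rel_ends X x0 (loop_join p (loop_rev p)) (loop_join g (loop_rev p))"
      by (rule loop_join_homotopic) (rule homotopic_rel_ends_refl[OF loop_rev_loops[OF p]])
    then show "homotopic_rel_ends X x0 (const_loop x0) (loop_join g (loop_rev p))"
      by (rule homotopic_rel_ends_trans[OF homotopic_rel_ends_sym[OF loop_join_rev_right[OF p]]])
  next
    assume "homotopic_rel_ends X x0 (const_loop x0) (loop_join g (loop_rev p))"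
    then have "homotopic_rel_ends X x0 g p"
      by (rule homotopic_rel_ends_cancel[OF g p homotopic_rel_ends_sym])
    then show "homotopic_rel_ends X x0 p g"
      by (rule homotopic_rel_ends_sym)
  qed
  then have "loop_class X x0 p =
      {g \<in> topspace (loop_space X x0). loop_join g (loop_rev p) \<in> loop_class X x0 (const_loop x0)}"
    using loop_join_loops[OF _ loop_rev_loops[OF p]]
    unfolding topspace_loop_space by (auto simp: mem_loop_class)
  then show ?thesis
    using openin_continuous_map_preimage[OF continuous_map_loop_join_right[OF loop_rev_loops[OF p]] null]
    by simp
qed

lemma null_class_open_iff:
  "openin (loop_space X x0) (loop_class X x0 (const_loop x0)) \<longleftrightarrow>
   (\<forall>\<alpha> \<in> loops X x0. homotopic_rel_ends X x0 \<alpha> (const_loop x0) \<longrightarrow>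
      (\<exists>U. openin (loop_space X x0) U \<and> \<alpha> \<in> U \<and>
           (\<forall>\<beta> \<in> U. homotopic_rel_ends X x0 \<beta> (const_loop x0))))"
proof -
  have null: "loop_class X x0 (const_loop x0) =
      {\<beta> \<in> loops X x0. homotopic_rel_ends X x0 \<beta> (const_loop x0)}"
    using homotopic_rel_ends_sym[of X x0 _ "const_loop x0"]
      homotopic_rel_ends_sym[of X x0 "const_loop x0"]
    by (auto simp: mem_loop_class)
  have sub: "U \<subseteq> loops X x0" if "openin (loop_space X x0) U" for U
    using openin_subset[OF that] by (simp add: topspace_loop_space)
  show ?thesis
    unfolding null
  proof
    assume "openin (loop_space X x0) {\<beta> \<in> loops X x0. homotopic_rel_ends X x0 \<beta> (const_loop x0)}"
    then show "\<forall>\<alpha> \<in> loops X x0. homotopic_rel_ends X x0 \<alpha> (const_loop x0) \<longrightarrow>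
      (\<exists>U. openin (loop_space X x0) U \<and> \<alpha> \<in> U \<and>
           (\<forall>\<beta> \<in> U. homotopic_rel_ends X x0 \<beta> (const_loop x0)))"
      by blast
  next
    assume local: "\<forall>\<alpha> \<in> loops X x0. homotopic_rel_ends X x0 \<alpha> (const_loop x0) \<longrightarrow>
      (\<exists>U. openin (loop_space X x0) U \<and> \<alpha> \<in> U \<and>
           (\<forall>\<beta> \<in> U. homotopic_rel_ends X x0 \<beta> (const_loop x0)))"
    show "openin (loop_space X x0) {\<beta> \<in> loops X x0. homotopic_rel_ends X x0 \<beta> (const_loop x0)}"
    proof (subst openin_subopen, intro ballI)
      fix \<alpha> assume "\<alpha> \<in> {\<beta> \<in> loops X x0. homotopic_rel_ends X x0 \<beta> (const_loop x0)}"
      then obtain U where U: "openin (loop_space X x0) U" "\<alpha> \<in> U"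
        "\<forall>\<beta> \<in> U. homotopic_rel_ends X x0 \<beta> (const_loop x0)"
        using local by blast
      then have "U \<subseteq> {\<beta> \<in> loops X x0. homotopic_rel_ends X x0 \<beta> (const_loop x0)}"
        using sub[OF U(1)] by blast
      with U show "\<exists>T. openin (loop_space X x0) T \<and> \<alpha> \<in> T \<and>
          T \<subseteq> {\<beta> \<in> loops X x0. homotopic_rel_ends X x0 \<beta> (const_loop x0)}"
        by blast
    qed
  qed
qed

theorem proposition3p16:
  fixes X :: "'a topology" and x0 :: 'a
  assumes "path_connected_space X" and "x0 \<in> topspace X"
  shows "(is_discrete (pi1_tau X x0) \<longleftrightarrow> is_discrete (pi1_qtop X x0)) \<and>
         (is_discrete (pi1_qtop X x0) \<longleftrightarrow>
            (\<forall>\<alpha> \<in> loops X x0. homotopic_rel_ends X x0 \<alpha> (const_loop x0) \<longrightarrow>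
               (\<exists>U. openin (loop_space X x0) U \<and> \<alpha> \<in> U \<and>
                    (\<forall>\<beta> \<in> U. homotopic_rel_ends X x0 \<beta> (const_loop x0)))))"
proof
  note x0 = assms(2)
  show "is_discrete (pi1_tau X x0) \<longleftrightarrow> is_discrete (pi1_qtop X x0)"
    unfolding pi1_tau_def
    by (rule tau_top_discrete_iff)
      (simp_all add: topspace_pi1_qtop pi1_word_eval_closed[OF x0] pi1_right_unit[OF x0])
  have "is_discrete (pi1_qtop X x0) \<longleftrightarrow>
      openin (loop_space X x0) (loop_class X x0 (const_loop x0))"
    using const_loop_loops[OF x0] loop_class_open_from_null_class
    by (auto simp: pi1_qtop_discrete_iff)
  then show "is_discrete (pi1_qtop X x0) \<longleftrightarrow>
            (\<forall>\<alpha> \<in> loops X x0. homotopic_rel_ends X x0 \<alpha> (const_loop x0) \<longrightarrow>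
               (\<exists>U. openin (loop_space X x0) U \<and> \<alpha> \<in> U \<and>
                    (\<forall>\<beta> \<in> U. homotopic_rel_ends X x0 \<beta> (const_loop x0))))"
    by (simp only: null_class_open_iff)
qed

end
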